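(* Let $T=(T_a,T_b)$ be the GFB tree with $n\geq 2$ leaves. Then $T_a$ and $T_b$ are also GFB trees (i.e. $T_a=T^{gfb}_{n_a}$ and $T_b=T^{gfb}_{n_b}$, where $n_a,n_b$ are their numbers of leaves).
   Context: A rooted binary tree with $n\geq 2$ leaves is a rooted tree whose root has degree 2 and all other internal nodes have degree 3; for $n=1$ it is a single node. Trees are considered up to isomorphism. $T=(T_a,T_b)$ denotes the decomposition into the subtrees rooted at the two children of the root. The GFB tree $T_n^{gfb}$ is the output of: start with $n$ single-node trees; while more than one tree remains, remove a tree $u$ of minimal size (number of leaves), then remove a tree $v$ of minimal size among the remaining ones, and insert the tree with a new root whose children are the roots of $u$ and $v$; output the remaining tree. *)

theory Defs
  imports Main "HOL-Library.Multiset"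
begin

text \<open>Rooted binary trees (plane representation); isomorphism of rooted trees
  is captured by the relation tree_iso, which allows swapping children.\<close>

datatype tree = Leaf | Node tree tree

fun leaves :: "tree \<Rightarrow> nat" where
  "leaves Leaf = 1"
| "leaves (Node a b) = leaves a + leaves b"

inductive tree_iso :: "tree \<Rightarrow> tree \<Rightarrow> bool" where
  iso_leaf: "tree_iso Leaf Leaf"
| iso_same: "tree_iso a a' \<Longrightarrow> tree_iso b b' \<Longrightarrow> tree_iso (Node a b) (Node a' b')"
| iso_swap: "tree_iso a b' \<Longrightarrow> tree_iso b a' \<Longrightarrow> tree_iso (Node a b) (Node a' b')"

definition gfb_step :: "tree multiset \<Rightarrow> tree multiset \<Rightarrow> bool" where
  "gfb_step M M' \<longleftrightarrow>
     (\<exists>u v. u \<in># M \<and> (\<forall>w \<in># M. leaves u \<le> leaves w) \<and>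
            v \<in># M - {#u#} \<and> (\<forall>w \<in># M - {#u#}. leaves v \<le> leaves w) \<and>
            M' = M - {#u, v#} + {#Node u v#})"

definition gfb_output :: "nat \<Rightarrow> tree \<Rightarrow> bool" where
  "gfb_output n T \<longleftrightarrow> gfb_step\<^sup>*\<^sup>* (replicate_mset n Leaf) {#T#}"

end

theory Submission
  imports Defs
begin

text \<open>A run of the GFB algorithm can be cut along any splitting of its final multiset
  of trees: going backwards, the step that created a tree of one part merged two trees
  that were minimal in the whole multiset, hence also minimal in that part, so each part
  is produced by its own GFB run. Starting from leaves only, the two trees merged in the
  last step are therefore outputs of GFB runs on as many leaves as they have.\<close>

lemma tree_iso_refl: "tree_iso t t"
  by (induction t) (auto intro: tree_iso.intros)

lemma gfb_stepE:
  assumes "gfb_step M M'"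
  obtains u v M0 where "M = add_mset u (add_mset v M0)" and "M' = add_mset (Node u v) M0"
    and "\<forall>w \<in># M. leaves u \<le> leaves w" and "\<forall>w \<in># add_mset v M0. leaves v \<le> leaves w"
proof -
  obtain u v where u: "u \<in># M" and u_min: "\<forall>w \<in># M. leaves u \<le> leaves w"
    and v: "v \<in># M - {#u#}" and v_min: "\<forall>w \<in># M - {#u#}. leaves v \<le> leaves w"
    and M': "M' = M - {#u, v#} + {#Node u v#}"
    using assms unfolding gfb_step_def by blast
  have M_u: "M = add_mset u (M - {#u#})" using u by simp
  have M_v: "M - {#u#} = add_mset v (M - {#u, v#})"
    using v by (metis add_mset_diff_bothsides diff_zero insert_DiffM minus_add_mset_if_not_in_lhs)
  show thesis
  proof (rule that)
    show "M = add_mset u (add_mset v (M - {#u, v#}))" using M_u M_v by simp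
    show "\<forall>w \<in># add_mset v (M - {#u, v#}). leaves v \<le> leaves w" using v_min M_v by simp
  qed (use M' u_min in simp_all)
qed

lemma gfb_step_restrict:
  assumes "\<forall>w \<in># add_mset u (add_mset v A) + B. leaves u \<le> leaves w"
    and "\<forall>w \<in># add_mset v A + B. leaves v \<le> leaves w"
  shows "gfb_step (add_mset u (add_mset v A)) (add_mset (Node u v) A)"
  unfolding gfb_step_def
proof (intro exI conjI)
  show "\<forall>w \<in># add_mset u (add_mset v A) - {#u#}. leaves v \<le> leaves w"
    using assms(2) by simp
qed (use assms(1) in simp_all)

lemma gfb_step_split:
  assumes "gfb_step N (A' + B')"
  shows "(\<exists>A. N = A + B' \<and> gfb_step A A') \<or> (\<exists>B. N = A' + B \<and> gfb_step B B')"
proof -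
  obtain u v N0 where N: "N = add_mset u (add_mset v N0)" and N0: "A' + B' = add_mset (Node u v) N0"
    and u_min: "\<forall>w \<in># N. leaves u \<le> leaves w" and v_min: "\<forall>w \<in># add_mset v N0. leaves v \<le> leaves w"
    using gfb_stepE[OF assms] by metis
  have part: "\<exists>X0. N = X0 + Y \<and> gfb_step X0 X"
    if X: "Node u v \<in># X" and XY: "X + Y = A' + B'" for X Y
  proof -
    define X1 where "X1 = X - {#Node u v#}"
    have X_eq: "X = add_mset (Node u v) X1" using X by (simp add: X1_def)
    have "N0 = X1 + Y" using XY N0 by (simp add: X_eq)
    then have N_eq: "N = add_mset u (add_mset v X1) + Y" using N by simp
    have "gfb_step (add_mset u (add_mset v X1)) X"
      unfolding X_eq
      by (rule gfb_step_restrict) (use u_min v_min N_eq \<open>N0 = X1 + Y\<close> in simp_all)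
    with N_eq show ?thesis by blast
  qed
  have "Node u v \<in># A' + B'" using N0 by simp
  then show ?thesis
    using part[of A' B'] part[of B' A'] by (auto simp: add.commute)
qed

lemma gfb_steps_split:
  assumes "gfb_step\<^sup>*\<^sup>* M N" and "N = A' + B'"
  shows "\<exists>A B. M = A + B \<and> gfb_step\<^sup>*\<^sup>* A A' \<and> gfb_step\<^sup>*\<^sup>* B B'"
  using assms
proof (induction arbitrary: A' B' rule: rtranclp_induct)
  case base
  then show ?case by blast
next
  case (step N N')
  from gfb_step_split[OF step.hyps(2)[unfolded step.prems]] show ?case
  proof
    assume "\<exists>A. N = A + B' \<and> gfb_step A A'"
    then obtain A'' where "N = A'' + B'" and last: "gfb_step A'' A'" by blast
    then obtain A B where "M = A + B" "gfb_step\<^sup>*\<^sup>* A A''" "gfb_step\<^sup>*\<^sup>* B B'"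
      using step.IH by blast
    with last show ?case by (blast intro: rtranclp.rtrancl_into_rtrancl)
  next
    assume "\<exists>B. N = A' + B \<and> gfb_step B B'"
    then obtain B'' where "N = A' + B''" and last: "gfb_step B'' B'" by blast
    then obtain A B where "M = A + B" "gfb_step\<^sup>*\<^sup>* A A'" "gfb_step\<^sup>*\<^sup>* B B''"
      using step.IH by blast
    with last show ?case by (blast intro: rtranclp.rtrancl_into_rtrancl)
  qed
qed

lemma gfb_step_preserves_leaves:
  "gfb_step M M' \<Longrightarrow> sum_mset (image_mset leaves M') = sum_mset (image_mset leaves M)"
  by (erule gfb_stepE) simp

lemma gfb_steps_preserve_leaves:
  "gfb_step\<^sup>*\<^sup>* M M' \<Longrightarrow> sum_mset (image_mset leaves M') = sum_mset (image_mset leaves M)"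
  by (induction rule: rtranclp_induct) (auto dest: gfb_step_preserves_leaves)

lemma gfb_output_of_leaf_submultiset:
  assumes "A \<subseteq># replicate_mset n Leaf" and "gfb_step\<^sup>*\<^sup>* A {#t#}"
  shows "gfb_output (leaves t) t"
proof -
  obtain m where A: "A = replicate_mset m Leaf"
    using assms(1) by (rule msubseteq_replicate_msetE)
  have "m = leaves t"
    using gfb_steps_preserve_leaves[OF assms(2)] by (simp add: A)
  then show ?thesis
    using assms(2) by (simp add: gfb_output_def A)
qed

lemma gfb_output_last_step:
  assumes "n \<ge> 2" and "gfb_output n T"
  obtains u v where "T = Node u v" and "gfb_step\<^sup>*\<^sup>* (replicate_mset n Leaf) {#u, v#}"
proof -
  have "replicate_mset n Leaf \<noteq> {#T#}"
    using assms(1) by (auto dest: arg_cong[where f = size])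
  moreover have "gfb_step\<^sup>*\<^sup>* (replicate_mset n Leaf) {#T#}"
    using assms(2) unfolding gfb_output_def .
  ultimately obtain N where run: "gfb_step\<^sup>*\<^sup>* (replicate_mset n Leaf) N" and "gfb_step N {#T#}"
    by (auto elim: rtranclp.cases)
  then obtain u v N0 where "N = add_mset u (add_mset v N0)" and "{#T#} = add_mset (Node u v) N0"
    by (auto elim: gfb_stepE)
  then have "T = Node u v" and "N = {#u, v#}"
    by simp_all
  with run show thesis
    using that by simp
qed

theorem lemma6:
  assumes "n \<ge> 2" and "gfb_output n T"
  shows "\<exists>Ta Tb. T = Node Ta Tb
           \<and> (\<exists>S. gfb_output (leaves Ta) S \<and> tree_iso Ta S)
           \<and> (\<exists>S. gfb_output (leaves Tb) S \<and> tree_iso Tb S)"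
proof -
  obtain u v where T: "T = Node u v" and run: "gfb_step\<^sup>*\<^sup>* (replicate_mset n Leaf) {#u, v#}"
    using gfb_output_last_step[OF assms] .
  obtain A B where AB: "replicate_mset n Leaf = A + B"
    and run_u: "gfb_step\<^sup>*\<^sup>* A {#u#}" and run_v: "gfb_step\<^sup>*\<^sup>* B {#v#}"
    using gfb_steps_split[OF run, of "{#u#}" "{#v#}"] by auto
  have "gfb_output (leaves u) u"
    using AB run_u by (intro gfb_output_of_leaf_submultiset[of A n]) simp_all
  moreover have "gfb_output (leaves v) v"
    using AB run_v by (intro gfb_output_of_leaf_submultiset[of B n]) simp_all
  ultimately show ?thesis
    using T tree_iso_refl by blast
qed

end
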